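(* Let $(D,S,B)$ be a datum. Then the map $\mathrm{Supp}\colon \mathrm{Sub}_S(D)\to\{\text{subsets of }\mathrm{Spc}(D,S)\}$, $I\mapsto \mathrm{Supp}(I)=\{P\in\mathrm{Spc}(D,S)\mid I\not\subset P\}$, is injective, and a left inverse is given by $Z\mapsto\{a\in D\mid \mathrm{Supp}(a)\subset Z\}$.
   Context: $\mathrm{Cat}_\infty^{\mathrm{perf}}$ denotes the $\infty$-category of small idempotent-complete stable $\infty$-categories. A datum $(D,S,B)$ consists of algebra objects $B,S$ of $\mathrm{Cat}_\infty^{\mathrm{perf}}$, a homomorphism $B\to S$, and a left $S$-module $D$ in $\mathrm{Cat}_\infty^{\mathrm{perf}}$; the action is written $s\otimes a$. An $S$-submodule of $D$ is a thick subcategory $I\subset D$ with $s\otimes a\in I$ for all $s\in S,a\in I$; $\mathrm{Sub}_S(D)$ is the set of $S$-submodules. An $S$-submodule $P$ is prime if for every family $\{I_i\}$ of $S$-submodules each strictly containing $P$, $\bigcap_i I_i$ strictly contains $P$. $\mathrm{Spc}(D,S)$ is the set of prime $S$-submodules; for $a\in D$, $\mathrm{Supp}(a)=\{P\in\mathrm{Spc}(D,S)\mid a\notin P\}$. *)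

theory Defs
  imports Main
begin

text \<open>The objects of D form the type 'a
(objects of the stable category; the ambient D is UNIV).  The stable structure
enters only through the data relevant to thickness:
  zero: a zero object; shift / shift_inv: suspension and its inverse;
  iso a b: a and b are equivalent; cofib a b c: there is a cofiber sequence
  a -> b -> c; retract a b: a is a retract of b.
The S-action is act s a (written s (x) a in the paper), s ranging over the
objects of S (type 's).  B and B -> S play no role in the statement.\<close>

record ('a, 's) datum =
  zero :: 'a
  shift :: "'a \<Rightarrow> 'a"
  shift_inv :: "'a \<Rightarrow> 'a"
  iso :: "'a \<Rightarrow> 'a \<Rightarrow> bool"
  cofib :: "'a \<Rightarrow> 'a \<Rightarrow> 'a \<Rightarrow> bool"
  retract :: "'a \<Rightarrow> 'a \<Rightarrow> bool"
  act :: "'s \<Rightarrow> 'a \<Rightarrow> 'a"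

definition thick :: "('a, 's) datum \<Rightarrow> 'a set \<Rightarrow> bool" where
  "thick X I \<longleftrightarrow>
     zero X \<in> I
   \<and> (\<forall>a b. iso X a b \<longrightarrow> a \<in> I \<longrightarrow> b \<in> I)
   \<and> (\<forall>a \<in> I. shift X a \<in> I \<and> shift_inv X a \<in> I)
   \<and> (\<forall>a b c. cofib X a b c \<longrightarrow>
        (a \<in> I \<and> b \<in> I \<longrightarrow> c \<in> I) \<and>
        (a \<in> I \<and> c \<in> I \<longrightarrow> b \<in> I) \<and>
        (b \<in> I \<and> c \<in> I \<longrightarrow> a \<in> I))
   \<and> (\<forall>a b. retract X a b \<longrightarrow> b \<in> I \<longrightarrow> a \<in> I)"

definition submodule :: "('a, 's) datum \<Rightarrow> 'a set \<Rightarrow> bool" where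
  "submodule X I \<longleftrightarrow> thick X I \<and> (\<forall>s. \<forall>a \<in> I. act X s a \<in> I)"

definition Sub :: "('a, 's) datum \<Rightarrow> 'a set set" where
  "Sub X = {I. submodule X I}"

text \<open>Prime: every family of submodules each strictly containing P has
intersection strictly containing P (the empty family has intersection D = UNIV).\<close>
definition prime_sub :: "('a, 's) datum \<Rightarrow> 'a set \<Rightarrow> bool" where
  "prime_sub X P \<longleftrightarrow> submodule X P \<and>
     (\<forall>F. F \<subseteq> Sub X \<longrightarrow> (\<forall>I\<in>F. P \<subset> I) \<longrightarrow> P \<subset> \<Inter>F)"

definition Spc :: "('a, 's) datum \<Rightarrow> 'a set set" where
  "Spc X = {P. prime_sub X P}"

definition Supp :: "('a, 's) datum \<Rightarrow> 'a \<Rightarrow> 'a set set" where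
  "Supp X a = {P \<in> Spc X. a \<notin> P}"

definition SuppI :: "('a, 's) datum \<Rightarrow> 'a set \<Rightarrow> 'a set set" where
  "SuppI X I = {P \<in> Spc X. \<not> I \<subseteq> P}"

end

theory Submission
  imports Defs
begin

text \<open>An object \<open>a\<close> outside a submodule \<open>I\<close> is avoided by a prime containing \<open>I\<close>:
by Zorn's lemma some submodule is maximal among those containing \<open>I\<close> but not \<open>a\<close>, and it
is prime because every strictly larger submodule contains \<open>a\<close>, hence so does the intersection
of any family of them. Thus \<open>a \<in> I\<close> iff \<open>Supp a \<subseteq> Supp I\<close>, which recovers \<open>I\<close> from its
support.\<close>

lemma thick_Union_chain:
  assumes "C \<noteq> {}" and thick: "\<forall>J\<in>C. thick X J" and chain: "chain\<^sub>\<subseteq> C"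
  shows "thick X (\<Union>C)"
proof -
  \<comment> \<open>Each closure rule of a thick subcategory has at most two hypotheses, and any two
      members of \<open>\<Union>C\<close> already lie in a common member of the chain.\<close>
  have binary: "z \<in> \<Union>C"
    if x: "x \<in> \<Union>C" and y: "y \<in> \<Union>C"
      and closed: "\<And>J. thick X J \<Longrightarrow> x \<in> J \<Longrightarrow> y \<in> J \<Longrightarrow> z \<in> J"
    for x y z
  proof -
    obtain J where "J \<in> C" "x \<in> J" "y \<in> J"
      using chain x y unfolding chain_subset_def by blast
    then show ?thesis using thick closed by blast
  qed
  have unary: "z \<in> \<Union>C"
    if "x \<in> \<Union>C" and "\<And>J. thick X J \<Longrightarrow> x \<in> J \<Longrightarrow> z \<in> J" for x z
    using binary[of x x z] that by blast
  show ?thesis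
    unfolding thick_def
  proof (intro conjI allI impI ballI)
    show "zero X \<in> \<Union>C"
      using assms(1) thick unfolding thick_def by blast
  next
    fix a b assume "iso X a b" and a: "a \<in> \<Union>C"
    show "b \<in> \<Union>C"
      by (rule unary[OF a]) (use \<open>iso X a b\<close> in \<open>auto simp: thick_def\<close>)
  next
    fix a assume a: "a \<in> \<Union>C"
    show "shift X a \<in> \<Union>C" "shift_inv X a \<in> \<Union>C"
      by (rule unary[OF a]; auto simp: thick_def)+
  next
    fix a b c assume cf: "cofib X a b c"
    show "c \<in> \<Union>C" if "a \<in> \<Union>C \<and> b \<in> \<Union>C"
      by (rule binary[of a b]) (use that cf in \<open>auto simp: thick_def\<close>)
    show "b \<in> \<Union>C" if "a \<in> \<Union>C \<and> c \<in> \<Union>C"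
      by (rule binary[of a c]) (use that cf in \<open>auto simp: thick_def\<close>)
    show "a \<in> \<Union>C" if "b \<in> \<Union>C \<and> c \<in> \<Union>C"
      by (rule binary[of b c]) (use that cf in \<open>auto simp: thick_def\<close>)
  next
    fix a b assume "retract X a b" and b: "b \<in> \<Union>C"
    show "a \<in> \<Union>C"
      by (rule unary[OF b]) (use \<open>retract X a b\<close> in \<open>auto simp: thick_def\<close>)
  qed
qed

lemma submodule_Union_chain:
  assumes "C \<noteq> {}" and "\<forall>J\<in>C. submodule X J" and "chain\<^sub>\<subseteq> C"
  shows "submodule X (\<Union>C)"
  using assms thick_Union_chain[of C X] unfolding submodule_def by blast

lemma prime_sub_if_maximal_avoiding:
  assumes M: "submodule X M" "a \<notin> M"
    and maximal: "\<And>J. submodule X J \<Longrightarrow> M \<subset> J \<Longrightarrow> a \<in> J"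
  shows "prime_sub X M"
  unfolding prime_sub_def
proof (intro conjI allI impI)
  fix F assume "F \<subseteq> Sub X" and above: "\<forall>J\<in>F. M \<subset> J"
  then have "a \<in> \<Inter>F"
    using maximal unfolding Sub_def by blast
  then show "M \<subset> \<Inter>F"
    using above \<open>a \<notin> M\<close> by blast
qed (fact M)

lemma exists_prime_avoiding:
  assumes I: "submodule X I" and a: "a \<notin> I"
  obtains P where "P \<in> Spc X" "I \<subseteq> P" "a \<notin> P"
proof -
  define A where "A = {J. submodule X J \<and> I \<subseteq> J \<and> a \<notin> J}"
  have "\<forall>C\<in>chains A. \<exists>U\<in>A. \<forall>J\<in>C. J \<subseteq> U"
  proof (intro ballI)
    fix C assume C: "C \<in> chains A"
    show "\<exists>U\<in>A. \<forall>J\<in>C. J \<subseteq> U"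
    proof (cases "C = {}")
      case True
      then show ?thesis using I a unfolding A_def by auto
    next
      case False
      from C have "C \<subseteq> A" "chain\<^sub>\<subseteq> C"
        unfolding chains_def by simp_all
      then have "submodule X (\<Union>C)"
        using False submodule_Union_chain[of C X] unfolding A_def by blast
      moreover have "I \<subseteq> \<Union>C" "a \<notin> \<Union>C"
        using False \<open>C \<subseteq> A\<close> unfolding A_def by blast+
      ultimately show ?thesis
        unfolding A_def by blast
    qed
  qed
  then obtain M where M: "M \<in> A" and maximal: "\<forall>J\<in>A. M \<subseteq> J \<longrightarrow> J = M"
    using Zorn_Lemma2 by blast
  have "prime_sub X M"
  proof (rule prime_sub_if_maximal_avoiding)
    show "submodule X M" "a \<notin> M"
      using M unfolding A_def by simp_all
    show "a \<in> J" if "submodule X J" "M \<subset> J" for J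
    proof (rule ccontr)
      assume "a \<notin> J"
      with that M have "J \<in> A"
        unfolding A_def by auto
      with maximal \<open>M \<subset> J\<close> show False
        by blast
    qed
  qed
  then show ?thesis
    using that M unfolding Spc_def A_def by simp
qed

lemma Collect_Supp_subset_SuppI:
  assumes "I \<in> Sub X"
  shows "{a. Supp X a \<subseteq> SuppI X I} = I"
proof (intro equalityI subsetI)
  fix a assume "a \<in> {a. Supp X a \<subseteq> SuppI X I}"
  then show "a \<in> I"
    using assms exists_prime_avoiding[of X I a]
    unfolding Sub_def Supp_def SuppI_def by blast
qed (auto simp: Supp_def SuppI_def)

theorem mainTheorem3:
  fixes X :: "('a, 's) datum"
  shows "inj_on (SuppI X) (Sub X) \<and>
         (\<forall>I \<in> Sub X. {a. Supp X a \<subseteq> SuppI X I} = I)"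
  using inj_on_inverseI[of "Sub X" "\<lambda>Z. {a. Supp X a \<subseteq> Z}" "SuppI X"]
    Collect_Supp_subset_SuppI[of _ X] by blast

end
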